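(* Fix an integer $m\geq 2$. Let $\Gamma$ be a distance-regular graph with smallest eigenvalue at least $-m$, valency $k\geq 3$, diameter $D\geq 2$ and intersection numbers $a_1$ and $c_2$. Define a line to be a maximal clique $C$ of $\Gamma$ with $|C|\ge a_1+2-(m-1)(c_2-1)$. If $a_1>m^2c_2$, then every vertex lies in at most $m$ lines, and each edge lies in a unique line.
   Context: A finite connected graph $\Gamma$ with diameter $D$ is distance-regular if there are integers $b_i,c_i$ ($0\le i\le D$) such that for any vertices $x,y$ with $d(x,y)=i$, exactly $c_i$ neighbours of $y$ are at distance $i-1$ from $x$ and exactly $b_i$ neighbours of $y$ are at distance $i+1$ from $x$; its valency is $k=b_0$ and $a_i:=k-b_i-c_i$. The smallest eigenvalue is that of the adjacency matrix. A clique is a set of pairwise adjacent vertices; it is maximal if it is not properly contained in another clique. *)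

theory Defs
  imports "HOL-Analysis.Analysis"
begin

definition simple_graph :: "('a \<Rightarrow> 'a \<Rightarrow> bool) \<Rightarrow> bool" where
  "simple_graph adj \<longleftrightarrow> (\<forall>x y. adj x y \<longrightarrow> adj y x) \<and> (\<forall>x. \<not> adj x x)"

definition connected_graph :: "('a \<Rightarrow> 'a \<Rightarrow> bool) \<Rightarrow> bool" where
  "connected_graph adj \<longleftrightarrow> (\<forall>x y. \<exists>n. (adj ^^ n) x y)"

definition gdist :: "('a \<Rightarrow> 'a \<Rightarrow> bool) \<Rightarrow> 'a \<Rightarrow> 'a \<Rightarrow> nat" where
  "gdist adj x y = (LEAST n. (adj ^^ n) x y)"

definition diameter :: "('a::finite \<Rightarrow> 'a \<Rightarrow> bool) \<Rightarrow> nat" where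
  "diameter adj = Max {gdist adj x y | x y. True}"

definition distance_regular :: "('a::finite \<Rightarrow> 'a \<Rightarrow> bool) \<Rightarrow> (nat \<Rightarrow> nat) \<Rightarrow> (nat \<Rightarrow> nat) \<Rightarrow> bool" where
  "distance_regular adj b c \<longleftrightarrow> simple_graph adj \<and> connected_graph adj \<and>
     (\<forall>x y i. gdist adj x y = i \<longrightarrow>
        (i \<ge> 1 \<longrightarrow> card {z. adj y z \<and> gdist adj x z = i - 1} = c i) \<and>
        card {z. adj y z \<and> gdist adj x z = i + 1} = b i)"

definition adj_matrix :: "('a::finite \<Rightarrow> 'a \<Rightarrow> bool) \<Rightarrow> real ^ 'a ^ 'a" where
  "adj_matrix adj = (\<chi> i j. if adj i j then 1 else 0)"

definition is_eigenvalue :: "real ^ 'n ^ 'n \<Rightarrow> real \<Rightarrow> bool" where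
  "is_eigenvalue A mu \<longleftrightarrow> (\<exists>v. v \<noteq> 0 \<and> A *v v = mu *\<^sub>R v)"

definition clique :: "('a \<Rightarrow> 'a \<Rightarrow> bool) \<Rightarrow> 'a set \<Rightarrow> bool" where
  "clique adj C \<longleftrightarrow> (\<forall>x\<in>C. \<forall>y\<in>C. x \<noteq> y \<longrightarrow> adj x y)"

definition maximal_clique :: "('a \<Rightarrow> 'a \<Rightarrow> bool) \<Rightarrow> 'a set \<Rightarrow> bool" where
  "maximal_clique adj C \<longleftrightarrow> clique adj C \<and> (\<forall>C'. clique adj C' \<and> C \<subseteq> C' \<longrightarrow> C' = C)"

end

theory Submission
  imports Defs
begin

text \<open>Write \<lambda> = a_1 and \<mu> = c_2. Since the least eigenvalue is at least -m, the matrix A + m I is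
  positive semidefinite; testing it against a vector f supported on a neighbourhood \<Gamma>(x), whose
  local graph is \<lambda>-regular, gives (\<Sum> f)^2 \<le> m (m + \<lambda>) \<Sum> f^2. For f the sum of the indicators of
  the closed local neighbourhoods of m + 1 pairwise nonadjacent neighbours of x, which pairwise
  share at most \<mu> - 1 vertices, this contradicts \<lambda> > m^2 \<mu>; so cocliques in \<Gamma>(x) have at most m
  vertices.

  For an edge xy extend {y} to a maximal coclique I of \<Gamma>(x). The common neighbours of x and y
  adjacent to no other vertex of I number at least \<lambda> - (|I| - 1)(\<mu> - 1), and they are pairwise
  adjacent: two nonadjacent ones would yield a coclique of size |I| + 1 whose closed local
  neighbourhoods, by inclusion-exclusion, cover more than the |I| (\<lambda> + 1) vertices of \<Gamma>(x). With x
  and y they extend to a line. Two lines through one edge lie in {x, y} \<union> (\<Gamma>(x) \<inter> \<Gamma>(y)) and meet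
  in at most \<mu> vertices, which is too little room for both. Finally, a vertex of each line through
  x can be chosen nonadjacent to those chosen before, so the lines through x yield a coclique of
  \<Gamma>(x) and there are at most m of them.\<close>

lemma inner_matrix_vector_symmetric:
  fixes M :: "real^'n^'n"
  assumes "transpose M = M"
  shows "(M *v u) \<bullet> w = u \<bullet> (M *v w)"
  by (metis assms dot_lmul_matrix vector_transpose_matrix)

lemma quadratic_form_add:
  fixes M :: "real^'n^'n"
  assumes "transpose M = M"
  shows "(u + w) \<bullet> (M *v (u + w)) = u \<bullet> (M *v u) + 2 * (w \<bullet> (M *v u)) + w \<bullet> (M *v w)"
  using inner_matrix_vector_symmetric[OF assms, of w u]
  by (simp add: matrix_vector_right_distrib inner_add_left inner_add_right inner_commute)

lemma nonneg_quadratic_linear_coeff_zero: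
  fixes a b :: real
  assumes "\<And>t. 0 \<le> 2 * t * a + t\<^sup>2 * b"
  shows "a = 0"
proof (rule ccontr)
  assume "a \<noteq> 0"
  define t where "t = - a / (\<bar>b\<bar> + 1)"
  have "t\<^sup>2 * b \<le> t\<^sup>2 * (\<bar>b\<bar> + 1)" by (intro mult_left_mono) auto
  then have "2 * t * a + t\<^sup>2 * b \<le> t * (2 * a + t * (\<bar>b\<bar> + 1))"
    by (simp add: power2_eq_square algebra_simps)
  also have "\<dots> = t * a"
    by (simp add: t_def add_pos_nonneg)
  also have "\<dots> = - a\<^sup>2 / (\<bar>b\<bar> + 1)"
    by (simp add: t_def power2_eq_square)
  also have "\<dots> < 0" using \<open>a \<noteq> 0\<close> by (simp add: add_pos_nonneg)
  finally show False using assms[of t] by simp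
qed

lemma psd_quadratic_form_zero_imp_kernel:
  fixes M :: "real^'n^'n"
  assumes sym: "transpose M = M" and psd: "\<And>y. 0 \<le> y \<bullet> (M *v y)" and "u \<bullet> (M *v u) = 0"
  shows "M *v u = 0"
proof -
  define g where "g = M *v u"
  have "0 \<le> 2 * t * (g \<bullet> g) + t\<^sup>2 * (g \<bullet> (M *v g))" for t
    using psd[of "u + t *\<^sub>R g"] assms(3) inner_matrix_vector_symmetric[OF sym, of u g]
    by (simp add: quadratic_form_add[OF sym] matrix_vector_mult_scaleR g_def power2_eq_square
        algebra_simps)
  then have "g \<bullet> g = 0" by (rule nonneg_quadratic_linear_coeff_zero)
  then show ?thesis by (simp add: g_def)
qed

lemma quadratic_form_ge_least_eigenvalue:
  fixes M :: "real^'n^'n"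
  assumes sym: "transpose M = M" and ev: "\<forall>mu. is_eigenvalue M mu \<longrightarrow> - r \<le> mu"
  shows "- r * (v \<bullet> v) \<le> v \<bullet> (M *v v)"
proof -
  have "continuous_on (sphere 0 1) (\<lambda>y. y \<bullet> (M *v y))"
    by (intro continuous_intros)
  then obtain u where u: "u \<in> sphere 0 1"
    and u_min: "\<And>y. y \<in> sphere 0 1 \<Longrightarrow> u \<bullet> (M *v u) \<le> y \<bullet> (M *v y)"
    using continuous_attains_inf[of "sphere (0::real^'n) 1"] by fastforce
  define l where "l = u \<bullet> (M *v u)"
  have uu: "u \<bullet> u = 1" using u by (simp add: dot_square_norm)
  have l_le: "l * (y \<bullet> y) \<le> y \<bullet> (M *v y)" for y
  proof (cases "y = 0")
    case False
    have "l \<le> (y /\<^sub>R norm y) \<bullet> (M *v (y /\<^sub>R norm y))"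
      using u_min[of "y /\<^sub>R norm y"] False by (simp add: l_def)
    also have "\<dots> = (y \<bullet> (M *v y)) / (y \<bullet> y)"
      using False
      by (simp add: matrix_vector_mult_scaleR dot_square_norm power2_eq_square field_simps)
    finally show ?thesis using False by (simp add: pos_le_divide_eq mult.commute)
  qed simp
  \<comment> \<open>u minimises the Rayleigh quotient, so M - l I is positive semidefinite and kills u.\<close>
  define P where "P = M - mat l"
  have scaled_id: "mat l *v y = l *\<^sub>R y" for y :: "real^'n"
    by (auto simp: vec_eq_iff matrix_vector_mult_def mat_def mult_delta_left)
  have P_form: "y \<bullet> (P *v y) = y \<bullet> (M *v y) - l * (y \<bullet> y)" for y
    by (simp add: P_def matrix_vector_mult_diff_rdistrib scaled_id inner_diff_right)
  have "P *v u = 0"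
  proof (rule psd_quadratic_form_zero_imp_kernel)
    have "M $ j $ i = M $ i $ j" for i j
      by (metis sym transpose_def vec_lambda_beta)
    then show "transpose P = P"
      by (simp add: P_def transpose_def mat_def vec_eq_iff)
  qed (use l_le uu in \<open>auto simp: P_form l_def\<close>)
  then have "M *v u = l *\<^sub>R u"
    by (simp add: P_def matrix_vector_mult_diff_rdistrib scaled_id)
  moreover have "u \<noteq> 0" using uu by auto
  ultimately have "- r \<le> l" using ev unfolding is_eigenvalue_def by blast
  then show ?thesis
    using l_le[of v] mult_right_mono[of "- r" l "v \<bullet> v"] by simp
qed

lemma clique_adj: "clique adj C \<Longrightarrow> x \<in> C \<Longrightarrow> y \<in> C \<Longrightarrow> x \<noteq> y \<Longrightarrow> adj x y"
  by (simp add: clique_def)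

lemma maximal_clique_eq: "maximal_clique adj C \<Longrightarrow> clique adj C' \<Longrightarrow> C \<subseteq> C' \<Longrightarrow> C' = C"
  by (simp add: maximal_clique_def)

lemma clique_subset_maximal_clique:
  fixes adj :: "'a::finite \<Rightarrow> 'a \<Rightarrow> bool"
  assumes "clique adj Q"
  obtains C where "maximal_clique adj C" and "Q \<subseteq> C"
proof -
  obtain C where "clique adj C" "Q \<subseteq> C" and "\<forall>C'. clique adj C' \<and> C \<subseteq> C' \<longrightarrow> C = C'"
    using finite_has_maximal2[of "{C. clique adj C}" Q] assms by auto
  then show thesis
    using that unfolding maximal_clique_def by metis
qed

lemma adj_matrix_quadratic_form:
  "(\<chi> v. f v) \<bullet> (adj_matrix adj *v (\<chi> v. f v))
    = (\<Sum>i\<in>UNIV. \<Sum>j\<in>UNIV. if adj i j then f i * f j else 0)"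
  by (simp add: inner_vec_def matrix_vector_mult_def adj_matrix_def sum_distrib_left
      if_distrib[where f="\<lambda>x. x * _"] if_distrib[where f="\<lambda>x. _ * x"] cong: if_cong)

lemma card_filter_eq_sum:
  "finite J \<Longrightarrow> card {y\<in>J. P y} = (\<Sum>y\<in>J. of_bool (P y))"
  using sum.inter_filter[of J "\<lambda>_. 1::nat" P] by (simp add: of_bool_def)

lemma card_eq_sum_of_bool: "card (A :: 'a::finite set) = (\<Sum>v\<in>UNIV. of_bool (v \<in> A))"
  using card_filter_eq_sum[of UNIV "\<lambda>v. v \<in> A"] by simp

lemma sum_card_incidences:
  fixes B :: "'i \<Rightarrow> 'a::finite set"
  assumes "finite J"
  shows "(\<Sum>v\<in>UNIV. card {y\<in>J. v \<in> B y}) = (\<Sum>y\<in>J. card (B y))"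
proof -
  have "(\<Sum>v\<in>UNIV. card {y\<in>J. v \<in> B y}) = (\<Sum>v\<in>UNIV. \<Sum>y\<in>J. of_bool (v \<in> B y))"
    by (simp only: card_filter_eq_sum[OF assms])
  also have "\<dots> = (\<Sum>y\<in>J. \<Sum>v\<in>UNIV. of_bool (v \<in> B y))"
    by (rule sum.swap)
  finally show ?thesis
    by (simp only: card_eq_sum_of_bool)
qed

lemma sum_card_incidences_squared:
  fixes B :: "'i \<Rightarrow> 'a::finite set"
  assumes "finite J"
  shows "(\<Sum>v\<in>UNIV. (card {y\<in>J. v \<in> B y})\<^sup>2) = (\<Sum>y\<in>J. \<Sum>z\<in>J. card (B y \<inter> B z))"
proof -
  have "(\<Sum>v\<in>UNIV. (card {y\<in>J. v \<in> B y})\<^sup>2)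
      = (\<Sum>v\<in>UNIV. \<Sum>y\<in>J. \<Sum>z\<in>J. of_bool (v \<in> B y \<inter> B z))"
    by (simp only: card_filter_eq_sum[OF assms] power2_eq_square sum_product of_bool_conj Int_iff)
  also have "\<dots> = (\<Sum>y\<in>J. \<Sum>z\<in>J. \<Sum>v\<in>UNIV. of_bool (v \<in> B y \<inter> B z))"
    by (simp only: sum.swap[of _ UNIV])
  finally show ?thesis
    by (simp only: card_eq_sum_of_bool)
qed

lemma card_UN_ge_Bonferroni:
  assumes "finite J" and "\<And>y. finite (B y)" and "\<And>y. y \<in> J \<Longrightarrow> card (B y) = K"
    and "\<And>y z. y \<in> J \<Longrightarrow> z \<in> J \<Longrightarrow> y \<noteq> z \<Longrightarrow> card (B y \<inter> B z) \<le> nu"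
  shows "2 * card J * K \<le> 2 * card (\<Union>(B ` J)) + card J * (card J - 1) * nu"
  using assms(1,3,4)
proof (induction J rule: finite_induct)
  case (insert a J)
  define n where "n = card J"
  define U where "U = \<Union>(B ` J)"
  have IH: "2 * n * K \<le> 2 * card U + n * (n - 1) * nu"
    using insert unfolding n_def U_def by auto
  have "card (B a \<inter> U) \<le> (\<Sum>z\<in>J. card (B a \<inter> B z))"
    unfolding U_def Int_UN_distrib by (rule card_UN_le) (use insert in simp)
  also have "\<dots> \<le> n * nu"
    using insert sum_mono[of J "\<lambda>z. card (B a \<inter> B z)" "\<lambda>_. nu"] by (auto simp: n_def)
  finally have "card (B a \<inter> U) \<le> n * nu" .
  moreover have "card (B a \<union> U) + card (B a \<inter> U) = K + card U"
    using card_Un_Int[of "B a" U] insert assms(2) by (auto simp: U_def)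
  moreover have "n * (n - 1) * nu + 2 * n * nu = (n + 1) * n * nu"
    by (cases n) (auto simp: algebra_simps)
  moreover have "2 * (n + 1) * K = 2 * n * K + 2 * K"
    by (simp add: algebra_simps)
  ultimately have "2 * (n + 1) * K \<le> 2 * card (B a \<union> U) + (n + 1) * n * nu"
    using IH by linarith
  moreover have "card (insert a J) = n + 1" and "\<Union>(B ` insert a J) = B a \<union> U"
    using insert by (simp_all add: n_def U_def)
  ultimately show ?case
    by simp
qed simp

locale lambda_mu_graph =
  fixes adj :: "'a::finite \<Rightarrow> 'a \<Rightarrow> bool" and lam mu :: nat
  assumes sym: "adj x y \<Longrightarrow> adj y x"
    and irrefl: "\<not> adj x x"
    and card_common_adjacent: "adj x y \<Longrightarrow> card {z. adj x z \<and> adj y z} = lam"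
    and card_common_distance_two:
      "x \<noteq> y \<Longrightarrow> \<not> adj x y \<Longrightarrow> adj x z \<Longrightarrow> adj z y \<Longrightarrow> card {z. adj x z \<and> adj y z} = mu"
begin

definition nbhd :: "'a \<Rightarrow> 'a set" where
  "nbhd x = {y. adj x y}"

lemma mem_nbhd [simp]: "y \<in> nbhd x \<longleftrightarrow> adj x y"
  by (simp add: nbhd_def)

lemma sym_conv: "adj x y \<longleftrightarrow> adj y x"
  using sym by blast

lemma card_nbhd_Int_adjacent: "adj x y \<Longrightarrow> card (nbhd x \<inter> nbhd y) = lam"
  using card_common_adjacent by (simp add: nbhd_def Int_def)

lemma card_nbhd_Int_distance_two:
  "x \<noteq> y \<Longrightarrow> \<not> adj x y \<Longrightarrow> z \<in> nbhd x \<inter> nbhd y \<Longrightarrow> card (nbhd x \<inter> nbhd y) = mu"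
  using card_common_distance_two[of x y z] sym[of y z] by (simp add: nbhd_def Int_def)

definition coclique :: "'a set \<Rightarrow> bool" where
  "coclique I \<longleftrightarrow> (\<forall>y\<in>I. \<forall>z\<in>I. \<not> adj y z)"

lemma coclique_insert: "coclique (insert v I) \<longleftrightarrow> coclique I \<and> (\<forall>z\<in>I. \<not> adj v z)"
  unfolding coclique_def using irrefl sym by fastforce

lemma coclique_subset: "coclique I \<Longrightarrow> J \<subseteq> I \<Longrightarrow> coclique J"
  unfolding coclique_def by blast

lemma clique_insert: "clique adj (insert v C) \<longleftrightarrow> clique adj C \<and> (\<forall>w\<in>C. w \<noteq> v \<longrightarrow> adj v w)"
  unfolding clique_def using sym by fastforce

definition local_closed_nbhd :: "'a \<Rightarrow> 'a \<Rightarrow> 'a set" where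
  "local_closed_nbhd x y = insert y (nbhd x \<inter> nbhd y)"

lemma local_closed_nbhd_subset: "adj x y \<Longrightarrow> local_closed_nbhd x y \<subseteq> nbhd x"
  by (auto simp: local_closed_nbhd_def)

lemma card_local_closed_nbhd: "adj x y \<Longrightarrow> card (local_closed_nbhd x y) = lam + 1"
  using card_nbhd_Int_adjacent irrefl by (simp add: local_closed_nbhd_def)

lemma card_local_closed_nbhd_Int_le:
  assumes "adj x y" "adj x z" "y \<noteq> z" "\<not> adj y z"
  shows "card (local_closed_nbhd x y \<inter> local_closed_nbhd x z) \<le> mu - 1"
proof -
  have x: "x \<in> nbhd y \<inter> nbhd z" using assms sym by auto
  have "local_closed_nbhd x y \<inter> local_closed_nbhd x z \<subseteq> (nbhd y \<inter> nbhd z) - {x}"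
    using assms sym irrefl by (auto simp: local_closed_nbhd_def)
  then have "card (local_closed_nbhd x y \<inter> local_closed_nbhd x z) \<le> card (nbhd y \<inter> nbhd z) - 1"
    using x card_mono[of "(nbhd y \<inter> nbhd z) - {x}"] by fastforce
  then show ?thesis
    using card_nbhd_Int_distance_two[OF assms(3,4) x] by simp
qed

lemma card_nbhd_Int_maximal_clique_le:
  assumes L: "maximal_clique adj L" and "v \<notin> L" "u \<in> L" "adj v u"
  shows "card (nbhd v \<inter> L) \<le> mu"
proof -
  have cl: "clique adj L" using L by (simp add: maximal_clique_def)
  have "\<not> clique adj (insert v L)"
    using L \<open>v \<notin> L\<close> unfolding maximal_clique_def by blast
  then obtain w where w: "w \<in> L" "\<not> adj v w"
    using cl \<open>v \<notin> L\<close> clique_insert by auto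
  have "v \<noteq> w" using w \<open>v \<notin> L\<close> by auto
  moreover have "u \<in> nbhd v \<inter> nbhd w"
    using w \<open>adj v u\<close> \<open>u \<in> L\<close> clique_adj[OF cl, of w u] sym[of w u] by auto
  ultimately have "card (nbhd v \<inter> nbhd w) = mu"
    using card_nbhd_Int_distance_two w by blast
  moreover have "nbhd v \<inter> L \<subseteq> nbhd v \<inter> nbhd w"
    using w by (auto intro: clique_adj[OF cl])
  ultimately show ?thesis
    by (metis card_mono finite)
qed

lemma card_union_maximal_cliques_le:
  assumes L1: "maximal_clique adj L1" and L2: "maximal_clique adj L2" and "L1 \<noteq> L2"
    and "adj x y" and x: "x \<in> L1" "x \<in> L2" and y: "y \<in> L1" "y \<in> L2"
  shows "card L1 + card L2 \<le> lam + 2 + mu"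
proof -
  have cl: "clique adj L1" "clique adj L2"
    using L1 L2 by (auto simp: maximal_clique_def)
  have "\<not> L2 \<subseteq> L1"
    using maximal_clique_eq[OF L2 cl(1)] \<open>L1 \<noteq> L2\<close> by blast
  then obtain v where v: "v \<in> L2" "v \<notin> L1" by blast
  have sub: "L1 \<inter> L2 \<subseteq> nbhd v \<inter> L1"
    using v by (auto intro: clique_adj[OF cl(2)])
  have "adj v x"
    using v x by (auto intro: clique_adj[OF cl(2)])
  then have "card (L1 \<inter> L2) \<le> mu"
    using card_mono[OF finite sub] card_nbhd_Int_maximal_clique_le[OF L1 v(2) x(1)] by linarith
  have "L1 \<union> L2 \<subseteq> insert x (insert y (nbhd x \<inter> nbhd y))"
  proof
    fix z assume z: "z \<in> L1 \<union> L2"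
    show "z \<in> insert x (insert y (nbhd x \<inter> nbhd y))"
    proof (cases "z = x \<or> z = y")
      case False
      then show ?thesis
        using z x y clique_adj[OF cl(1)] clique_adj[OF cl(2)] by auto
    qed auto
  qed
  then have "card (L1 \<union> L2) \<le> card (insert x (insert y (nbhd x \<inter> nbhd y)))"
    by (intro card_mono) auto
  also have "\<dots> \<le> card (nbhd x \<inter> nbhd y) + 2"
    by (simp add: card_insert_if)
  finally have "card (L1 \<union> L2) \<le> lam + 2"
    using card_nbhd_Int_adjacent[OF \<open>adj x y\<close>] by simp
  with \<open>card (L1 \<inter> L2) \<le> mu\<close> show ?thesis
    using card_Un_Int[of L1 L2] by simp
qed

lemma local_quadratic_form_le:
  assumes supp: "\<And>v. v \<notin> nbhd x \<Longrightarrow> f v = 0"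
  shows "(\<chi> v. f v) \<bullet> (adj_matrix adj *v (\<chi> v. f v)) \<le> real lam * (\<Sum>v\<in>UNIV. (f v)\<^sup>2)"
proof -
  have pointwise: "(if adj i j then f i * f j else 0)
      \<le> (if adj i j \<and> adj x j then (f i)\<^sup>2 / 2 else 0)
        + (if adj i j \<and> adj x i then (f j)\<^sup>2 / 2 else 0)"
    for i j
  proof (cases "adj i j \<and> adj x i \<and> adj x j")
    case True
    then show ?thesis
      using sum_squares_bound[of "f i" "f j"] by (simp add: power2_eq_square)
  next
    case False
    then have "\<not> adj i j \<or> f i = 0 \<or> f j = 0" using supp by auto
    then show ?thesis by auto
  qed
  have local_degree: "real (card {j. adj i j \<and> adj x j}) * (f i)\<^sup>2 = real lam * (f i)\<^sup>2" for i
  proof (cases "adj x i")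
    case True
    have "{j. adj i j \<and> adj x j} = nbhd x \<inter> nbhd i" by auto
    then show ?thesis
      using card_nbhd_Int_adjacent[OF True] by simp
  qed (use supp in simp)
  have row_sum: "(\<Sum>j\<in>UNIV. if adj i j \<and> adj x j then (f i)\<^sup>2 / 2 else 0) = real lam * (f i)\<^sup>2 / 2"
    for i
    using sum.inter_filter[of UNIV "\<lambda>_. (f i)\<^sup>2 / 2" "\<lambda>j. adj i j \<and> adj x j"] local_degree[of i]
    by simp
  have "(\<chi> v. f v) \<bullet> (adj_matrix adj *v (\<chi> v. f v))
      = (\<Sum>i\<in>UNIV. \<Sum>j\<in>UNIV. if adj i j then f i * f j else 0)"
    by (rule adj_matrix_quadratic_form)
  also have "\<dots> \<le> (\<Sum>i\<in>UNIV. \<Sum>j\<in>UNIV. (if adj i j \<and> adj x j then (f i)\<^sup>2 / 2 else 0))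
      + (\<Sum>i\<in>UNIV. \<Sum>j\<in>UNIV. (if adj i j \<and> adj x i then (f j)\<^sup>2 / 2 else 0))"
    unfolding sum.distrib[symmetric] by (intro sum_mono pointwise)
  also have "(\<Sum>i\<in>UNIV. \<Sum>j\<in>UNIV. (if adj i j \<and> adj x i then (f j)\<^sup>2 / 2 else 0))
      = (\<Sum>j\<in>UNIV. \<Sum>i\<in>UNIV. (if adj j i \<and> adj x i then (f j)\<^sup>2 / 2 else 0))"
    by (subst sum.swap) (simp add: sym_conv)
  also have "(\<Sum>i\<in>UNIV. \<Sum>j\<in>UNIV. (if adj i j \<and> adj x j then (f i)\<^sup>2 / 2 else 0))
      + (\<Sum>j\<in>UNIV. \<Sum>i\<in>UNIV. (if adj j i \<and> adj x i then (f j)\<^sup>2 / 2 else 0))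
      = real lam * (\<Sum>v\<in>UNIV. (f v)\<^sup>2)"
    by (simp add: row_sum sum_distrib_left sum_divide_distrib[symmetric])
  finally show ?thesis .
qed

lemma maximal_coclique_dominates:
  assumes "coclique I" and maximal: "\<And>v. adj x v \<Longrightarrow> coclique (insert v I) \<Longrightarrow> v \<in> I"
  shows "nbhd x \<subseteq> (\<Union>z\<in>I. local_closed_nbhd x z)"
proof
  fix v assume "v \<in> nbhd x"
  show "v \<in> (\<Union>z\<in>I. local_closed_nbhd x z)"
  proof (cases "v \<in> I")
    case True
    then show ?thesis by (auto simp: local_closed_nbhd_def)
  next
    case False
    then obtain z where "z \<in> I" "adj v z"
      using maximal[of v] \<open>v \<in> nbhd x\<close> assms(1) coclique_insert by auto
    then show ?thesis
      using \<open>v \<in> nbhd x\<close> sym by (auto simp: local_closed_nbhd_def)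
  qed
qed

lemma dominating_coclique_through:
  assumes "adj x y"
  obtains I where "y \<in> I" "I \<subseteq> nbhd x" "coclique I"
    and "nbhd x \<subseteq> (\<Union>z\<in>I. local_closed_nbhd x z)"
proof -
  define \<I> where "\<I> = {I. I \<subseteq> nbhd x \<and> coclique I}"
  have "{y} \<in> \<I>"
    using assms irrefl by (simp add: \<I>_def coclique_def)
  from finite_has_maximal2[OF finite this]
  obtain I where "I \<in> \<I>" "{y} \<subseteq> I" and maximal: "\<forall>I'\<in>\<I>. I \<subseteq> I' \<longrightarrow> I = I'"
    by (elim bexE conjE)
  then have I: "y \<in> I" "I \<subseteq> nbhd x" "coclique I" by (auto simp: \<I>_def)
  have dom: "nbhd x \<subseteq> (\<Union>z\<in>I. local_closed_nbhd x z)"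
  proof (rule maximal_coclique_dominates[OF I(3)])
    fix v assume "adj x v" "coclique (insert v I)"
    then have "insert v I \<in> \<I>" using I(2) by (simp add: \<I>_def)
    then have "I = insert v I" using maximal by blast
    then show "v \<in> I" by blast
  qed
  show thesis
    using that I dom by blast
qed

lemma dominating_coclique_bound:
  assumes "I \<subseteq> nbhd x" and dom: "nbhd x \<subseteq> (\<Union>z\<in>I. local_closed_nbhd x z)"
    and J: "J \<subseteq> nbhd x" "coclique J" "card J = card I + 1"
  shows "2 * (lam + 1) \<le> card J * card I * (mu - 1)"
proof -
  have "card (nbhd x) \<le> (\<Sum>z\<in>I. card (local_closed_nbhd x z))"
    using order.trans[OF card_mono[OF finite dom] card_UN_le[OF finite]] .
  also have "\<dots> = card I * (lam + 1)"
    using \<open>I \<subseteq> nbhd x\<close> card_local_closed_nbhd by (simp add: subset_iff)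
  finally have N: "card (nbhd x) \<le> card I * (lam + 1)" .
  have "2 * card J * (lam + 1)
      \<le> 2 * card (\<Union>(local_closed_nbhd x ` J)) + card J * (card J - 1) * (mu - 1)"
  proof (rule card_UN_ge_Bonferroni)
    show "card (local_closed_nbhd x y) = lam + 1" if "y \<in> J" for y
      using that J(1) card_local_closed_nbhd by auto
    show "card (local_closed_nbhd x y \<inter> local_closed_nbhd x z) \<le> mu - 1"
      if "y \<in> J" "z \<in> J" "y \<noteq> z" for y z
      using that J(1,2) unfolding coclique_def by (intro card_local_closed_nbhd_Int_le) auto
  qed auto
  moreover have "\<Union>(local_closed_nbhd x ` J) \<subseteq> nbhd x"
    using J(1) by (intro UN_least local_closed_nbhd_subset) auto
  then have "card (\<Union>(local_closed_nbhd x ` J)) \<le> card (nbhd x)"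
    by (intro card_mono) auto
  moreover have "card J * (card J - 1) * (mu - 1) = card J * card I * (mu - 1)"
    and "2 * card J * (lam + 1) = 2 * (card I * (lam + 1)) + 2 * (lam + 1)"
    using J(3) by (simp_all add: algebra_simps)
  ultimately show ?thesis
    using N by linarith
qed

lemma sum_count_local_closed_nbhds:
  assumes "J \<subseteq> nbhd x"
  shows "(\<Sum>v\<in>UNIV. card {y\<in>J. v \<in> local_closed_nbhd x y}) = card J * (lam + 1)"
proof -
  have "(\<Sum>v\<in>UNIV. card {y\<in>J. v \<in> local_closed_nbhd x y}) = (\<Sum>y\<in>J. card (local_closed_nbhd x y))"
    by (rule sum_card_incidences) simp
  also have "\<dots> = card J * (lam + 1)"
    using assms card_local_closed_nbhd by (simp add: subset_iff)
  finally show ?thesis .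
qed

lemma sum_count_local_closed_nbhds_squared_le:
  assumes J: "J \<subseteq> nbhd x" "coclique J"
  shows "(\<Sum>v\<in>UNIV. (card {y\<in>J. v \<in> local_closed_nbhd x y})\<^sup>2)
    \<le> card J * (lam + 1 + (card J - 1) * (mu - 1))"
proof -
  let ?B = "local_closed_nbhd x"
  have JN: "adj x y" if "y \<in> J" for y
    using J(1) that by auto
  have row: "(\<Sum>z\<in>J. card (?B y \<inter> ?B z)) \<le> lam + 1 + (card J - 1) * (mu - 1)" if "y \<in> J" for y
  proof -
    have "(\<Sum>z\<in>J. card (?B y \<inter> ?B z)) = card (?B y) + (\<Sum>z\<in>J - {y}. card (?B y \<inter> ?B z))"
      using that by (simp add: sum.remove)
    also have "\<dots> \<le> (lam + 1) + (\<Sum>z\<in>J - {y}. mu - 1)"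
      using that JN J(2) card_local_closed_nbhd card_local_closed_nbhd_Int_le
      by (intro add_mono sum_mono) (auto simp: coclique_def)
    finally show ?thesis using that by simp
  qed
  have "(\<Sum>v\<in>UNIV. (card {y\<in>J. v \<in> ?B y})\<^sup>2) = (\<Sum>y\<in>J. \<Sum>z\<in>J. card (?B y \<inter> ?B z))"
    by (rule sum_card_incidences_squared) simp
  also have "\<dots> \<le> (\<Sum>y\<in>J. lam + 1 + (card J - 1) * (mu - 1))"
    by (rule sum_mono) (rule row)
  finally show ?thesis by simp
qed

definition private_common_nbhd :: "'a \<Rightarrow> 'a set \<Rightarrow> 'a \<Rightarrow> 'a set" where
  "private_common_nbhd x I y = (nbhd x \<inter> nbhd y) - (\<Union>z\<in>I - {y}. nbhd z)"

lemma card_private_common_nbhd_ge: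
  assumes I: "I \<subseteq> nbhd x" "coclique I" "y \<in> I"
  shows "lam \<le> card (private_common_nbhd x I y) + (card I - 1) * (mu - 1)"
proof -
  let ?C = "nbhd x \<inter> nbhd y"
  have "card (?C \<inter> (\<Union>z\<in>I - {y}. nbhd z)) \<le> (\<Sum>z\<in>I - {y}. card (?C \<inter> nbhd z))"
    unfolding Int_UN_distrib by (rule card_UN_le) simp
  also have "\<dots> \<le> (\<Sum>z\<in>I - {y}. mu - 1)"
  proof (rule sum_mono)
    fix z assume z: "z \<in> I - {y}"
    then have "\<not> adj y z" "y \<noteq> z" using I unfolding coclique_def by auto
    moreover have "adj x y" "adj x z" using z I by auto
    ultimately have "card (local_closed_nbhd x y \<inter> local_closed_nbhd x z) \<le> mu - 1"
      using card_local_closed_nbhd_Int_le by blast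
    moreover have "?C \<inter> nbhd z \<subseteq> local_closed_nbhd x y \<inter> local_closed_nbhd x z"
      by (auto simp: local_closed_nbhd_def)
    ultimately show "card (?C \<inter> nbhd z) \<le> mu - 1"
      using card_mono[OF finite] le_trans by blast
  qed
  also have "\<dots> = (card I - 1) * (mu - 1)"
    using I(3) by simp
  finally have "card (?C \<inter> (\<Union>z\<in>I - {y}. nbhd z)) \<le> (card I - 1) * (mu - 1)" .
  moreover have "card (private_common_nbhd x I y) = card ?C - card (?C \<inter> (\<Union>z\<in>I - {y}. nbhd z))"
    unfolding private_common_nbhd_def by (rule card_Diff_subset_Int) simp
  moreover have "card ?C = lam"
    using I card_nbhd_Int_adjacent by auto
  ultimately show ?thesis by linarith
qed

lemma private_common_nbhd_clique:
  assumes I: "I \<subseteq> nbhd x" "coclique I" "y \<in> I"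
    and dom: "nbhd x \<subseteq> (\<Union>z\<in>I. local_closed_nbhd x z)"
    and small: "(card I + 1) * card I * (mu - 1) < 2 * (lam + 1)"
  shows "clique adj (private_common_nbhd x I y)"
  unfolding clique_def
proof (intro ballI impI)
  fix w w' assume w: "w \<in> private_common_nbhd x I y" "w' \<in> private_common_nbhd x I y" "w \<noteq> w'"
  show "adj w w'"
  proof (rule ccontr)
    assume "\<not> adj w w'"
    define J where "J = insert w (insert w' (I - {y}))"
    have nonadjacent: "\<not> adj u z" if "u \<in> {w, w'}" "z \<in> I - {y}" for u z
    proof
      assume "adj u z"
      then have "u \<in> nbhd z" using sym by simp
      then show False using w that unfolding private_common_nbhd_def by blast
    qed
    have "w \<notin> I" "w' \<notin> I"
      using w I unfolding private_common_nbhd_def coclique_def by auto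
    moreover have "card (I - {y}) + 1 = card I"
      using card_Suc_Diff1[OF finite I(3)] by simp
    ultimately have "card J = card I + 1"
      using w(3) by (simp add: J_def)
    moreover have "coclique (I - {y})"
      using coclique_subset[OF I(2)] by blast
    then have "coclique J"
      unfolding J_def coclique_insert using nonadjacent \<open>\<not> adj w w'\<close> by auto
    moreover have "J \<subseteq> nbhd x"
      using w I unfolding J_def private_common_nbhd_def by auto
    ultimately have "2 * (lam + 1) \<le> card J * card I * (mu - 1)"
      by (intro dominating_coclique_bound[OF I(1) dom])
    with small \<open>card J = card I + 1\<close> show False
      by simp
  qed
qed

end

locale lambda_mu_graph_least_eigenvalue = lambda_mu_graph +
  fixes m :: nat
  assumes m_pos: "1 \<le> m"
    and least_eigenvalue: "is_eigenvalue (adj_matrix adj) \<theta> \<Longrightarrow> - real m \<le> \<theta>"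
begin

lemma adj_matrix_symmetric: "transpose (adj_matrix adj) = adj_matrix adj"
  by (simp add: transpose_def adj_matrix_def vec_eq_iff sym_conv)

text \<open>The test vector is f - (\<Sum> f / m) e_x.\<close>

lemma nbhd_sum_squared_le:
  assumes supp: "\<And>v. v \<notin> nbhd x \<Longrightarrow> f v = 0"
  shows "(\<Sum>v\<in>UNIV. f v)\<^sup>2 \<le> real m * (real m + real lam) * (\<Sum>v\<in>UNIV. (f v)\<^sup>2)"
proof -
  let ?A = "adj_matrix adj" and ?F = "\<chi> v. f v" and ?e = "axis x (1::real)"
  define \<sigma> where "\<sigma> = (\<Sum>v\<in>UNIV. f v)"
  define S where "S = (\<Sum>v\<in>UNIV. (f v)\<^sup>2)"
  define t where "t = \<sigma> / real m"
  have m: "real m > 0" using m_pos by simp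
  have "f x = 0" using supp irrefl by simp
  have eAF: "?e \<bullet> (?A *v ?F) = \<sigma>"
  proof -
    have "?e \<bullet> (?A *v ?F) = (\<Sum>j\<in>UNIV. if adj x j then f j else 0)"
      by (simp add: inner_axis' matrix_vector_mult_def adj_matrix_def
          if_distrib[where f="\<lambda>a. a * _"] cong: if_cong)
    also have "\<dots> = \<sigma>"
      unfolding \<sigma>_def using supp by (intro sum.cong) auto
    finally show ?thesis .
  qed
  have eAe: "?e \<bullet> (?A *v ?e) = 0"
    by (simp add: inner_axis' matrix_vector_mult_basis column_def adj_matrix_def irrefl)
  have FF: "?F \<bullet> ?F = S" by (simp add: S_def inner_vec_def power2_eq_square)
  have eF: "?e \<bullet> ?F = 0" using \<open>f x = 0\<close> by (simp add: inner_axis')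
  have ee: "?e \<bullet> ?e = 1" by (simp add: inner_axis')
  have norm: "(?F + (- t) *\<^sub>R ?e) \<bullet> (?F + (- t) *\<^sub>R ?e) = S + t\<^sup>2"
    by (simp add: inner_diff_left inner_diff_right FF eF ee inner_commute[of ?F ?e]
        power2_eq_square)
  have "- real m * ((?F + (- t) *\<^sub>R ?e) \<bullet> (?F + (- t) *\<^sub>R ?e))
      \<le> (?F + (- t) *\<^sub>R ?e) \<bullet> (?A *v (?F + (- t) *\<^sub>R ?e))"
    using quadratic_form_ge_least_eigenvalue[OF adj_matrix_symmetric] least_eigenvalue by blast
  also have "\<dots> = ?F \<bullet> (?A *v ?F) + 2 * (((- t) *\<^sub>R ?e) \<bullet> (?A *v ?F))
      + ((- t) *\<^sub>R ?e) \<bullet> (?A *v ((- t) *\<^sub>R ?e))"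
    by (rule quadratic_form_add[OF adj_matrix_symmetric])
  also have "\<dots> = ?F \<bullet> (?A *v ?F) - 2 * t * \<sigma>"
    by (simp add: matrix_vector_mult_scaleR eAF eAe del: scaleR_minus_left)
  also have "\<dots> \<le> real lam * S - 2 * t * \<sigma>"
    using local_quadratic_form_le[OF supp] by (simp add: S_def)
  finally have "- real m * (S + t\<^sup>2) \<le> real lam * S - 2 * t * \<sigma>"
    by (simp only: norm)
  moreover have "2 * t * \<sigma> - real m * t\<^sup>2 = \<sigma>\<^sup>2 / real m"
    using m by (simp add: t_def power2_eq_square field_simps)
  ultimately have "\<sigma>\<^sup>2 / real m \<le> (real m + real lam) * S"
    by (simp add: algebra_simps)
  then have "\<sigma>\<^sup>2 \<le> (real m + real lam) * S * real m"
    using m by (simp add: pos_divide_le_eq)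
  then show ?thesis
    by (simp add: \<sigma>_def S_def mult_ac)
qed

end

lemma coclique_bound_arith:
  fixes m lam nu :: real
  assumes "0 \<le> m" "0 \<le> nu" "m\<^sup>2 * (nu + 1) + 1 \<le> lam"
  shows "m * (m + lam) * ((m + 1) * (lam + 1 + m * nu)) < ((m + 1) * (lam + 1))\<^sup>2"
proof -
  define X where "X = lam + 1"
  have M: "0 \<le> m\<^sup>2 * (nu + 1)" using assms by simp
  then have X: "m\<^sup>2 * (nu + 1) + 2 \<le> X" using assms by (simp add: X_def)
  have "X * (m + 2) \<le> X * (X - m\<^sup>2 * (nu + 1) + m)"
    using X M by (intro mult_left_mono) auto
  moreover have "(m\<^sup>2 * (nu + 1) + 2) * (m + 2) \<le> X * (m + 2)"
    using X assms by (intro mult_right_mono) auto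
  moreover have "m\<^sup>2 * nu * (m - 1) < (m\<^sup>2 * (nu + 1) + 2) * (m + 2)"
    using assms by (simp add: algebra_simps power2_eq_square add_pos_nonneg mult_nonneg_nonneg)
  moreover have "(m + 1) * X\<^sup>2 - m * (m + X - 1) * (X + m * nu)
      = X * (X - m\<^sup>2 * (nu + 1) + m) - m\<^sup>2 * nu * (m - 1)"
    by (simp add: algebra_simps power2_eq_square)
  ultimately have "m * (m + lam) * (lam + 1 + m * nu) < (m + 1) * (lam + 1)\<^sup>2"
    by (simp add: X_def algebra_simps)
  then have "(m + 1) * (m * (m + lam) * (lam + 1 + m * nu)) < (m + 1) * ((m + 1) * (lam + 1)\<^sup>2)"
    using assms(1) by (intro mult_strict_left_mono) auto
  then show ?thesis
    by (simp add: power_mult_distrib power2_eq_square mult_ac)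
qed

locale lambda_mu_graph_lines = lambda_mu_graph_least_eigenvalue +
  assumes mu_pos: "1 \<le> mu" and lam_gt: "m\<^sup>2 * mu < lam"
begin

definition line :: "'a set \<Rightarrow> bool" where
  "line C \<longleftrightarrow> maximal_clique adj C \<and> int lam + 2 - (int m - 1) * (int mu - 1) \<le> int (card C)"

lemma line_iff: "line C \<longleftrightarrow> maximal_clique adj C \<and> lam + 2 \<le> card C + (m - 1) * (mu - 1)"
proof -
  have "int ((m - 1) * (mu - 1)) = (int m - 1) * (int mu - 1)"
    using m_pos mu_pos by (simp add: of_nat_diff)
  then show ?thesis
    unfolding line_def by linarith
qed

lemma coclique_card_le:
  assumes "I \<subseteq> nbhd x" "coclique I"
  shows "card I \<le> m"
proof (rule ccontr)
  assume "\<not> card I \<le> m"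
  then obtain J where J: "J \<subseteq> I" "card J = m + 1"
    using obtain_subset_with_card_n[of "m + 1" I] by auto
  have JN: "J \<subseteq> nbhd x" and coc: "coclique J"
    using J assms coclique_subset by auto
  define nu where "nu = mu - 1"
  define f where "f v = real (card {y\<in>J. v \<in> local_closed_nbhd x y})" for v
  have "f v = 0" if "v \<notin> nbhd x" for v
    using that JN local_closed_nbhd_subset unfolding f_def by fastforce
  then have main: "(\<Sum>v\<in>UNIV. f v)\<^sup>2 \<le> real m * (real m + real lam) * (\<Sum>v\<in>UNIV. (f v)\<^sup>2)"
    by (rule nbhd_sum_squared_le)
  have sum: "(\<Sum>v\<in>UNIV. f v) = (real m + 1) * (real lam + 1)"
    using sum_count_local_closed_nbhds[OF JN] J(2) unfolding f_def
    by (simp add: algebra_simps flip: of_nat_sum)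
  have "(\<Sum>v\<in>UNIV. (f v)\<^sup>2) \<le> (real m + 1) * (real lam + 1 + real m * real nu)"
  proof -
    have "real (\<Sum>v\<in>UNIV. (card {y\<in>J. v \<in> local_closed_nbhd x y})\<^sup>2)
        \<le> real ((m + 1) * (lam + 1 + m * nu))"
      using sum_count_local_closed_nbhds_squared_le[OF JN coc] J(2) unfolding nu_def
      by (simp only: of_nat_le_iff) simp
    then show ?thesis
      unfolding f_def by (simp add: algebra_simps)
  qed
  then have "real m * (real m + real lam) * (\<Sum>v\<in>UNIV. (f v)\<^sup>2)
      \<le> real m * (real m + real lam) * ((real m + 1) * (real lam + 1 + real m * real nu))"
    by (rule mult_left_mono) simp
  moreover have "real m * (real m + real lam) * ((real m + 1) * (real lam + 1 + real m * real nu))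
      < ((real m + 1) * (real lam + 1))\<^sup>2"
  proof (rule coclique_bound_arith)
    have "m\<^sup>2 * (nu + 1) + 1 \<le> lam" using lam_gt mu_pos by (simp add: nu_def)
    then show "(real m)\<^sup>2 * (real nu + 1) + 1 \<le> real lam"
      by (metis of_nat_1 of_nat_add of_nat_le_iff of_nat_mult of_nat_power)
  qed auto
  moreover have "((real m + 1) * (real lam + 1))\<^sup>2
      \<le> real m * (real m + real lam) * (\<Sum>v\<in>UNIV. (f v)\<^sup>2)"
    using main by (simp only: sum)
  ultimately show False
    by linarith
qed

lemma line_through_edge:
  assumes "adj x y"
  obtains C where "line C" "x \<in> C" "y \<in> C"
proof -
  obtain I where I: "y \<in> I" "I \<subseteq> nbhd x" "coclique I"
    and dom: "nbhd x \<subseteq> (\<Union>z\<in>I. local_closed_nbhd x z)"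
    using dominating_coclique_through[OF assms] by blast
  have "card I \<le> m"
    using coclique_card_le I(2,3) by simp
  define R where "R = private_common_nbhd x I y"
  have "(card I + 1) * card I * (mu - 1) \<le> (m + m) * m * (mu - 1)"
    using \<open>card I \<le> m\<close> m_pos by (intro mult_mono) auto
  also have "\<dots> \<le> (m + m) * m * mu"
    by (intro mult_le_mono2) simp
  also have "\<dots> = 2 * (m\<^sup>2 * mu)"
    by (simp add: power2_eq_square algebra_simps)
  also have "\<dots> < 2 * (lam + 1)"
    using lam_gt by simp
  finally have "clique adj R"
    unfolding R_def using I dom by (intro private_common_nbhd_clique) auto
  moreover have "\<forall>w\<in>R. adj x w \<and> adj y w"
    by (auto simp: R_def private_common_nbhd_def)
  ultimately have "clique adj (insert x (insert y R))"
    using assms unfolding clique_insert by auto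
  then obtain C where C: "maximal_clique adj C" "insert x (insert y R) \<subseteq> C"
    using clique_subset_maximal_clique by blast
  have "x \<notin> R" "y \<notin> R" "x \<noteq> y"
    using irrefl assms by (auto simp: R_def private_common_nbhd_def)
  then have "card R + 2 \<le> card C"
    using card_mono[OF finite C(2)] by simp
  moreover have "lam \<le> card R + (card I - 1) * (mu - 1)"
    unfolding R_def using I by (intro card_private_common_nbhd_ge)
  moreover have "(card I - 1) * (mu - 1) \<le> (m - 1) * (mu - 1)"
    using \<open>card I \<le> m\<close> by (intro mult_le_mono1) simp
  ultimately have "lam + 2 \<le> card C + (m - 1) * (mu - 1)"
    by linarith
  then have "line C"
    using C(1) by (simp add: line_iff)
  then show thesis
    using that C(2) by blast
qed

lemma line_unique:
  assumes "line L1" "line L2" "adj x y" "x \<in> L1" "y \<in> L1" "x \<in> L2" "y \<in> L2"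
  shows "L1 = L2"
proof (rule ccontr)
  assume "L1 \<noteq> L2"
  then have "card L1 + card L2 \<le> lam + 2 + mu"
    using card_union_maximal_cliques_le[of L1 L2 x y] assms by (simp add: line_iff)
  moreover have "lam + 2 \<le> card L1 + (m - 1) * (mu - 1)" "lam + 2 \<le> card L2 + (m - 1) * (mu - 1)"
    using assms(1,2) by (auto simp: line_iff)
  moreover obtain a b where "m = a + 1" "mu = b + 1"
    using m_pos mu_pos by (metis le_add_diff_inverse2)
  moreover have "m\<^sup>2 * mu < lam" by (rule lam_gt)
  ultimately show False
    by (simp add: power2_eq_square algebra_simps)
qed

lemma line_avoiding_coclique:
  assumes L: "line L" "x \<in> L" and I: "I \<subseteq> nbhd x" "coclique I" "I \<inter> L = {}"
  obtains y where "y \<in> L" "y \<noteq> x" "\<forall>z\<in>I. \<not> adj z y"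
proof -
  have max: "maximal_clique adj L" using L by (simp add: line_iff)
  have few: "card (nbhd z \<inter> (L - {x})) \<le> mu - 1" if "z \<in> I" for z
  proof -
    have "z \<notin> L" "adj z x" using that I sym[of x z] by auto
    then have "card (nbhd z \<inter> L) \<le> mu"
      using card_nbhd_Int_maximal_clique_le[OF max _ L(2)] by blast
    moreover have "x \<in> nbhd z \<inter> L" using \<open>adj z x\<close> L(2) by simp
    moreover have "nbhd z \<inter> (L - {x}) = (nbhd z \<inter> L) - {x}" by blast
    ultimately show ?thesis
      by (simp add: card_Diff_singleton)
  qed
  have "\<exists>y\<in>L - {x}. \<forall>z\<in>I. \<not> adj z y"
  proof (rule ccontr)
    assume none: "\<not> ?thesis"
    have "L - {x} \<subseteq> (\<Union>z\<in>I. nbhd z \<inter> (L - {x}))"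
    proof
      fix w assume "w \<in> L - {x}"
      then obtain z where "z \<in> I" "adj z w" using none by blast
      then show "w \<in> (\<Union>z\<in>I. nbhd z \<inter> (L - {x}))" using \<open>w \<in> L - {x}\<close> by auto
    qed
    then have "card (L - {x}) \<le> (\<Sum>z\<in>I. card (nbhd z \<inter> (L - {x})))"
      by (rule order.trans[OF card_mono[OF finite] card_UN_le[OF finite]])
    also have "\<dots> \<le> card I * (mu - 1)"
      using sum_mono[of I _ "\<lambda>_. mu - 1", OF few] by simp
    also have "\<dots> \<le> m * (mu - 1)"
      using coclique_card_le[OF I(1,2)] by simp
    finally have "card L \<le> m * (mu - 1) + 1"
      using L(2) by (simp add: card_Diff_singleton)
    moreover have "lam + 2 \<le> card L + (m - 1) * (mu - 1)"
      using L(1) by (simp add: line_iff)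
    moreover obtain a b where "m = a + 1" "mu = b + 1"
      using m_pos mu_pos by (metis le_add_diff_inverse2)
    moreover have "m\<^sup>2 * mu < lam" by (rule lam_gt)
    ultimately show False
      by (simp add: power2_eq_square algebra_simps)
  qed
  then show thesis using that by blast
qed

lemma coclique_transversal_of_lines:
  assumes "finite F" "\<And>L. L \<in> F \<Longrightarrow> line L \<and> x \<in> L"
  shows "\<exists>I. I \<subseteq> nbhd x \<and> coclique I \<and> card I = card F \<and> I \<subseteq> \<Union>F"
  using assms
proof (induction F rule: finite_induct)
  case empty
  show ?case by (auto simp: coclique_def)
next
  case (insert L F)
  then obtain I where I: "I \<subseteq> nbhd x" "coclique I" "card I = card F" "I \<subseteq> \<Union>F"
    by auto
  have L: "line L" "x \<in> L" using insert.prems by auto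
  have "I \<inter> L = {}"
  proof -
    have "z \<notin> L" if "z \<in> I" for z
    proof
      assume "z \<in> L"
      obtain L' where "L' \<in> F" "z \<in> L'" using I(4) \<open>z \<in> I\<close> by blast
      moreover have "adj x z" using I(1) \<open>z \<in> I\<close> by auto
      ultimately have "L' = L"
        using line_unique[of L' L x z] insert.prems \<open>z \<in> L\<close> L by blast
      then show False using \<open>L' \<in> F\<close> insert.hyps(2) by blast
    qed
    then show ?thesis by blast
  qed
  then obtain y where y: "y \<in> L" "y \<noteq> x" "\<forall>z\<in>I. \<not> adj z y"
    using line_avoiding_coclique[OF L I(1,2)] by blast
  have "clique adj L"
    using L(1) by (simp add: line_iff maximal_clique_def)
  then have "adj x y"
    using L(2) y(1,2) clique_adj by metis
  moreover have "y \<notin> I" using \<open>I \<inter> L = {}\<close> y(1) by blast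
  moreover have "coclique (insert y I)"
    using I(2) y(3) unfolding coclique_insert by (auto simp: sym_conv[of y])
  ultimately show ?case
    using I insert.hyps y(1) by (intro exI[of _ "insert y I"]) auto
qed

lemma card_lines_through_vertex_le: "card {C. line C \<and> x \<in> C} \<le> m"
proof -
  have "\<exists>I. I \<subseteq> nbhd x \<and> coclique I \<and> card I = card {C. line C \<and> x \<in> C}
      \<and> I \<subseteq> \<Union>{C. line C \<and> x \<in> C}"
    by (rule coclique_transversal_of_lines) auto
  then obtain I where "I \<subseteq> nbhd x" "coclique I" "card I = card {C. line C \<and> x \<in> C}"
    by blast
  then show ?thesis
    using coclique_card_le[of I x] by simp
qed

end

context
  fixes adj :: "'a::finite \<Rightarrow> 'a \<Rightarrow> bool" and b c :: "nat \<Rightarrow> nat"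
  assumes dr: "distance_regular adj b c"
begin

lemma distance_regular_sym: "adj x y \<Longrightarrow> adj y x"
  and distance_regular_irrefl: "\<not> adj x x"
  using dr unfolding distance_regular_def simple_graph_def by blast+

lemma distance_regular_c:
  "gdist adj x y = i \<Longrightarrow> 1 \<le> i \<Longrightarrow> card {z. adj y z \<and> gdist adj x z = i - 1} = c i"
  and distance_regular_b: "gdist adj x y = i \<Longrightarrow> card {z. adj y z \<and> gdist adj x z = i + 1} = b i"
  using dr unfolding distance_regular_def by blast+

lemma gdist_walk: "(adj ^^ gdist adj x y) x y"
  unfolding gdist_def
  by (rule LeastI_ex) (use dr in \<open>simp add: distance_regular_def connected_graph_def\<close>)

lemma gdist_le_walk: "(adj ^^ n) x y \<Longrightarrow> gdist adj x y \<le> n"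
  unfolding gdist_def by (rule Least_le)

lemma gdist_eq_0_iff: "gdist adj x y = 0 \<longleftrightarrow> x = y"
  using gdist_walk[of x y] gdist_le_walk[of 0 x y] by auto

lemma gdist_eq_1_iff: "gdist adj x y = 1 \<longleftrightarrow> adj x y"
  using gdist_walk[of x y] gdist_le_walk[of 1 x y] gdist_eq_0_iff[of x y] distance_regular_irrefl
  by (cases "gdist adj x y") auto

lemma gdist_eq_2:
  assumes "x \<noteq> z" "\<not> adj x z" "adj x y" "adj y z"
  shows "gdist adj x z = 2"
proof -
  have "(adj ^^ 2) x z"
    using assms by (auto simp: numeral_2_eq_2 intro: relpowp_Suc_I)
  then have "gdist adj x z \<le> 2" by (rule gdist_le_walk)
  moreover have "gdist adj x z \<noteq> 0" "gdist adj x z \<noteq> 1"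
    using assms gdist_eq_0_iff gdist_eq_1_iff by auto
  ultimately show ?thesis by simp
qed

lemma card_common_nbrs_distance_two:
  assumes "x \<noteq> z" "\<not> adj x z" "adj x y" "adj y z"
  shows "card {w. adj x w \<and> adj z w} = c 2"
proof -
  have "card {w. adj z w \<and> gdist adj x w = 2 - 1} = c 2"
    using distance_regular_c[OF gdist_eq_2[OF assms]] by simp
  moreover have "{w. adj z w \<and> gdist adj x w = 2 - 1} = {w. adj x w \<and> adj z w}"
    using gdist_eq_1_iff by auto
  ultimately show ?thesis by simp
qed

lemma card_common_nbrs_adjacent:
  assumes "adj x y"
  shows "card {z. adj x z \<and> adj y z} = b 0 - b 1 - c 1"
proof -
  have "gdist adj x y = 1" using assms gdist_eq_1_iff by simp
  then have "card {z. adj y z \<and> gdist adj x z = 0} = c 1" and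
    "card {z. adj y z \<and> gdist adj x z = 2} = b 1"
    using distance_regular_c[of x y 1] distance_regular_b[of x y 1]
    by (simp_all add: numeral_2_eq_2)
  moreover have "{z. adj y z \<and> gdist adj x z = 0} = {x}"
    using gdist_eq_0_iff assms distance_regular_sym by auto
  moreover have "card {z. adj y z} = b 0"
    using distance_regular_b[of y y 0] gdist_eq_0_iff[of y y] gdist_eq_1_iff by simp
  moreover have "adj x z \<or> gdist adj x z = 2" if "adj y z" "z \<noteq> x" for z
    using gdist_eq_2[of x z y] that assms by auto
  then have "{z. adj y z} = insert x ({z. adj x z \<and> adj y z} \<union> {z. adj y z \<and> gdist adj x z = 2})"
    using assms distance_regular_sym by auto
  moreover have "x \<notin> {z. adj x z \<and> adj y z} \<union> {z. adj y z \<and> gdist adj x z = 2}"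
    using distance_regular_irrefl gdist_eq_0_iff[of x x] by auto
  moreover have "{z. adj x z \<and> adj y z} \<inter> {z. adj y z \<and> gdist adj x z = 2} = {}"
    by (auto simp flip: gdist_eq_1_iff)
  ultimately show ?thesis
    by (simp add: card_Un_disjoint)
qed

lemma distance_regular_lambda_mu_graph: "lambda_mu_graph adj (b 0 - b 1 - c 1) (c 2)"
  using card_common_nbrs_adjacent card_common_nbrs_distance_two distance_regular_sym
    distance_regular_irrefl by unfold_locales auto

lemma distance_regular_c2_pos:
  assumes "2 \<le> diameter adj"
  shows "1 \<le> c 2"
proof (rule ccontr)
  assume "\<not> 1 \<le> c 2"
  have no_path: "\<not> (x \<noteq> z \<and> \<not> adj x z \<and> adj x y \<and> adj y z)" for x y z
  proof
    assume path: "x \<noteq> z \<and> \<not> adj x z \<and> adj x y \<and> adj y z"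
    then have "y \<in> {w. adj x w \<and> adj z w}"
      using distance_regular_sym by auto
    then have "card {w. adj x w \<and> adj z w} \<noteq> 0"
      by (auto simp: card_eq_0_iff)
    then show False
      using card_common_nbrs_distance_two[of x z y] path \<open>\<not> 1 \<le> c 2\<close> by simp
  qed
  have walk: "(adj ^^ n) x y \<Longrightarrow> x = y \<or> adj x y" for n x y
  proof (induction n arbitrary: y)
    case (Suc n)
    then obtain u where "(adj ^^ n) x u" "adj u y" by auto
    then show ?case using Suc.IH no_path by blast
  qed simp
  have "{gdist adj x y |x y. True} = (\<lambda>(x, y). gdist adj x y) ` UNIV" by auto
  then have "diameter adj \<in> {gdist adj x y |x y. True}"
    unfolding diameter_def by (intro Max_in) auto
  then obtain x y where "2 \<le> gdist adj x y"
    using assms by auto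
  moreover have "x = y \<or> adj x y"
    using walk gdist_walk by blast
  ultimately show False
    using gdist_eq_0_iff[of x y] gdist_eq_1_iff[of x y] by auto
qed

end

theorem proposition5p2:
  fixes adj :: "'a::finite \<Rightarrow> 'a \<Rightarrow> bool" and b c :: "nat \<Rightarrow> nat" and m :: nat
  assumes "m \<ge> 2"
    and "distance_regular adj b c"
    and "\<forall>mu. is_eigenvalue (adj_matrix adj) mu \<longrightarrow> mu \<ge> - real m"
    and "b 0 \<ge> 3"
    and "diameter adj \<ge> 2"
    and "b 0 - b 1 - c 1 > m ^ 2 * c 2"
  defines "line \<equiv> \<lambda>C. maximal_clique adj C \<and>
             int (card C) \<ge> int (b 0 - b 1 - c 1) + 2 - (int m - 1) * (int (c 2) - 1)"
  shows "(\<forall>x. card {C. line C \<and> x \<in> C} \<le> m) \<and>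
         (\<forall>x y. adj x y \<longrightarrow> (\<exists>!C. line C \<and> x \<in> C \<and> y \<in> C))"
proof -
  have "lambda_mu_graph adj (b 0 - b 1 - c 1) (c 2)"
    by (rule distance_regular_lambda_mu_graph[OF assms(2)])
  then interpret G: lambda_mu_graph_lines adj "b 0 - b 1 - c 1" "c 2" m
    using assms(1,3,6) distance_regular_c2_pos[OF assms(2,5)]
    by (simp add: lambda_mu_graph_lines_def lambda_mu_graph_lines_axioms_def
        lambda_mu_graph_least_eigenvalue_def lambda_mu_graph_least_eigenvalue_axioms_def)
  have "line = G.line"
    unfolding line_def by (intro ext) (simp only: G.line_def)
  show ?thesis
    unfolding \<open>line = G.line\<close>
  proof (intro conjI allI impI)
    show "card {C. G.line C \<and> x \<in> C} \<le> m" for x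
      by (rule G.card_lines_through_vertex_le)
  next
    fix x y assume "adj x y"
    then obtain C where "G.line C" "x \<in> C" "y \<in> C"
      by (rule G.line_through_edge)
    then show "\<exists>!C. G.line C \<and> x \<in> C \<and> y \<in> C"
      using G.line_unique[OF _ _ \<open>adj x y\<close>] by blast
  qed
qed

end
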